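(* Let $a,b,n$ be positive integers, $h(j)=aj^n+b$ for $j\ge0$, $h(j)=0$ for $j<0$, $\alpha=a/b$ and $c(h)=\lfloor\alpha\rfloor+1$. Let $$\alpha_1=2^n+\sqrt{2^{2n}-2^n+2}-\tfrac12,\qquad g(x)=x+\tfrac32-\sqrt{x^2-(2^{n+1}-1)x-\tfrac74}\ \ (x>\alpha_1).$$ Let $d$ be an integer with $2\le d\le c(h)$. Then: (1) if $\alpha\le\alpha_1$, then $\beta_2^d(h)\ge0$; (2) if $\alpha>\alpha_1$ and $d\le g(\alpha)$, then $\beta_2^d(h)\ge0$; (3) if $\alpha>\alpha_1$ and $d>g(\alpha)$, then $\operatorname{hdepth}(h)<d$.
   Context: For a nonzero function $h:\mathbb Z\to\mathbb Z_{\ge 0}$ with $h(j)=0$ for all sufficiently negative $j$, and integers $k\le d$, set $\beta_k^d(h)=\sum_{j\le k}(-1)^{k-j}\binom{d-j}{k-j}h(j)$, and $\operatorname{hdepth}(h)=\max\{d\in\mathbb Z:\ \beta_k^d(h)\ge 0\text{ for all integers }k\le d\}$. *)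

theory Defs
  imports Complex_Main
begin

text \<open>beta_k^d(h) = sum over j <= k of (-1)^(k-j) * binom(d-j, k-j) * h(j).
  Only finitely many terms are nonzero when h vanishes for sufficiently negative j
  (and j <= k); we sum over those terms.\<close>
definition beta :: "int \<Rightarrow> int \<Rightarrow> (int \<Rightarrow> int) \<Rightarrow> int" where
  "beta k d h = (\<Sum>j\<in>{j. j \<le> k \<and> h j \<noteq> 0}.
      (-1) ^ nat (k - j) * int (nat (d - j) choose nat (k - j)) * h j)"

definition hdepth :: "(int \<Rightarrow> int) \<Rightarrow> int" where
  "hdepth h = (GREATEST d. \<forall>k. k \<le> d \<longrightarrow> 0 \<le> beta k d h)"

end

theory Submission
  imports Defs
begin

text \<open>For h(j) = a j^n + b and alpha = a/b, beta_1^D >= 0 says D <= alpha + 1, while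
  2 beta_2^D / b = (D - alpha - 3/2)^2 - Delta(alpha) with Delta(x) = x^2 - (2^(n+1) - 1) x - 7/4.
  Delta(alpha) <= 0 exactly when alpha <= alpha_1, and otherwise, for D <= alpha + 1,
  beta_2^D >= 0 exactly when D lies below the smaller root g(alpha). So every D >= d > g(alpha)
  violates beta_1 or beta_2, which bounds the depth.\<close>

lemma Greatest_int_less:
  fixes P :: "int \<Rightarrow> bool"
  assumes "P k" and bound: "\<And>x. P x \<Longrightarrow> x < d"
  shows "(GREATEST x. P x) < d"
proof -
  define S where "S = {x \<in> {k..d}. P x}"
  have "finite S" unfolding S_def by (rule finite_subset[of _ "{k..d}"]) auto
  moreover have "k \<in> S" unfolding S_def using \<open>P k\<close> bound[OF \<open>P k\<close>] by simp
  ultimately have M: "Max S \<in> S" "\<And>x. x \<in> S \<Longrightarrow> x \<le> Max S"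
    by (auto intro: Max_in)
  have "(GREATEST x. P x) = Max S"
  proof (rule Greatest_equality)
    show "P (Max S)" using M(1) unfolding S_def by simp
    show "y \<le> Max S" if "P y" for y
      using M \<open>k \<in> S\<close> bound[OF that] that unfolding S_def by (cases "k \<le> y") force+
  qed
  with M(1) bound show ?thesis unfolding S_def by auto
qed

lemma beta_eq_sum_from_0:
  assumes "\<And>j. j < 0 \<Longrightarrow> h j = 0"
  shows "beta k d h = (\<Sum>j=0..k. (-1) ^ nat (k - j) * int (nat (d - j) choose nat (k - j)) * h j)"
  unfolding beta_def using assms by (intro sum.mono_neutral_left) (auto, meson not_le)

lemma beta_1:
  assumes "\<And>j. j < 0 \<Longrightarrow> h j = 0" and "0 \<le> d"
  shows "beta 1 d h = h 1 - d * h 0"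
proof -
  have "{0..1::int} = {0, 1}" by auto
  with assms show ?thesis by (simp add: beta_eq_sum_from_0)
qed

lemma beta_2:
  assumes "\<And>j. j < 0 \<Longrightarrow> h j = 0" and "1 \<le> d"
  shows "2 * beta 2 d h = d * (d - 1) * h 0 - 2 * (d - 1) * h 1 + 2 * h 2"
proof -
  have "{0..2::int} = {0, 1, 2}" by auto
  then have "beta 2 d h = int (nat d choose 2) * h 0 - (d - 1) * h 1 + h 2"
    using assms by (simp add: beta_eq_sum_from_0 numeral_2_eq_2 nat_diff_distrib) (simp add: algebra_simps)
  then have "2 * beta 2 d h = 2 * int (nat d choose 2) * h 0 - 2 * (d - 1) * h 1 + 2 * h 2"
    by (simp add: algebra_simps)
  also have "2 * int (nat d choose 2) = d * (d - 1)"
  proof -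
    have "even (nat d * (nat d - 1))"
      by (cases "even (nat d)") (auto simp: even_mult_iff)
    then have "2 * (nat d choose 2) = nat d * (nat d - 1)"
      by (simp add: choose_two)
    then have "2 * int (nat d choose 2) = int (nat d) * int (nat d - 1)"
      by (metis of_nat_mult of_nat_numeral)
    then show ?thesis using assms(2) by simp
  qed
  finally show ?thesis .
qed

lemma beta_nonneg_at_depth_0:
  assumes "\<And>j. j < 0 \<Longrightarrow> h j = 0" and "0 \<le> h 0" and "k \<le> 0"
  shows "0 \<le> beta k 0 h"
  using assms by (cases "k = 0") (auto simp: beta_eq_sum_from_0)

lemma hdepth_less:
  assumes "\<And>j. j < 0 \<Longrightarrow> h j = 0" and "0 \<le> h 0"
    and fails: "\<And>D. d \<le> D \<Longrightarrow> \<exists>k\<le>D. beta k D h < 0"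
  shows "hdepth h < d"
  unfolding hdepth_def
proof (rule Greatest_int_less)
  show "\<forall>k\<le>0. 0 \<le> beta k 0 h" using assms(1,2) beta_nonneg_at_depth_0 by blast
  show "D < d" if "\<forall>k\<le>D. 0 \<le> beta k D h" for D
    using that fails[of D] by force
qed

definition power_plus_const :: "nat \<Rightarrow> nat \<Rightarrow> nat \<Rightarrow> int \<Rightarrow> int" where
  "power_plus_const a b n j = (if 0 \<le> j then int a * j ^ n + int b else 0)"

definition beta2_discr :: "nat \<Rightarrow> real \<Rightarrow> real" where
  "beta2_discr n x = x\<^sup>2 - (2 ^ (n + 1) - 1) * x - 7 / 4"

lemma power_plus_const_vanishes: "j < 0 \<Longrightarrow> power_plus_const a b n j = 0"
  by (simp add: power_plus_const_def)

lemma beta_1_power_plus_const_nonneg_iff: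
  assumes "0 < n" "0 < b" "0 \<le> D"
  shows "0 \<le> beta 1 D (power_plus_const a b n) \<longleftrightarrow> real_of_int D \<le> real a / real b + 1"
proof -
  have "beta 1 D (power_plus_const a b n) = int a + int b - D * int b"
    using assms by (simp add: beta_1 power_plus_const_vanishes) (simp add: power_plus_const_def)
  then have "0 \<le> beta 1 D (power_plus_const a b n)
      \<longleftrightarrow> real_of_int (D * int b) \<le> real_of_int (int a + int b)"
    by (simp only: of_int_le_iff) simp
  also have "\<dots> \<longleftrightarrow> real_of_int D * real b \<le> real a + real b"
    by simp
  also have "\<dots> \<longleftrightarrow> real_of_int D \<le> real a / real b + 1"
    using assms(2) by (simp add: field_simps)
  finally show ?thesis .
qed

lemma beta_2_power_plus_const:
  assumes "0 < n" "0 < b" "1 \<le> D"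
  shows "2 * real_of_int (beta 2 D (power_plus_const a b n))
    = real b * ((real_of_int D - real a / real b - 3 / 2)\<^sup>2 - beta2_discr n (real a / real b))"
proof -
  have "2 * beta 2 D (power_plus_const a b n)
      = D * (D - 1) * int b - 2 * (D - 1) * (int a + int b) + 2 * (int a * 2 ^ n + int b)"
    using assms by (simp add: beta_2 power_plus_const_vanishes) (simp add: power_plus_const_def)
  then have "2 * real_of_int (beta 2 D (power_plus_const a b n))
      = real_of_int (D * (D - 1) * int b - 2 * (D - 1) * (int a + int b) + 2 * (int a * 2 ^ n + int b))"
    by (metis of_int_mult of_int_numeral)
  also have "\<dots> = real b * ((real_of_int D - real a / real b - 3 / 2)\<^sup>2 - beta2_discr n (real a / real b))"
    using assms(2) by (simp add: beta2_discr_def field_simps power2_eq_square)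
  finally show ?thesis .
qed

text \<open>No sign condition on the discriminant is needed: sqrt of a negative number is negative.\<close>

lemma beta_2_power_plus_const_nonneg_iff:
  assumes "0 < n" "0 < b" "1 \<le> D" and D_le: "real_of_int D \<le> real a / real b + 3 / 2"
  shows "0 \<le> beta 2 D (power_plus_const a b n)
    \<longleftrightarrow> real_of_int D \<le> real a / real b + 3 / 2 - sqrt (beta2_discr n (real a / real b))"
proof -
  define \<alpha> where "\<alpha> = real a / real b"
  define y where "y = \<alpha> + 3 / 2 - real_of_int D"
  have "y \<ge> 0" using D_le unfolding y_def \<alpha>_def by simp
  have y_sq: "(real_of_int D - \<alpha> - 3 / 2)\<^sup>2 = y\<^sup>2"
    unfolding y_def by (simp add: power2_eq_square algebra_simps)
  have "0 \<le> beta 2 D (power_plus_const a b n)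
      \<longleftrightarrow> 0 \<le> real b * ((real_of_int D - \<alpha> - 3 / 2)\<^sup>2 - beta2_discr n \<alpha>)"
    using beta_2_power_plus_const[OF assms(1-3), of a] unfolding \<alpha>_def by linarith
  also have "\<dots> \<longleftrightarrow> beta2_discr n \<alpha> \<le> y\<^sup>2"
    using assms(2) by (simp add: zero_le_mult_iff y_sq)
  also have "\<dots> \<longleftrightarrow> sqrt (beta2_discr n \<alpha>) \<le> y"
    using \<open>y \<ge> 0\<close> real_le_lsqrt sqrt_le_D by blast
  finally show ?thesis unfolding y_def \<alpha>_def by linarith
qed

lemma beta2_discr_nonpos_iff:
  assumes "0 \<le> x"
  shows "beta2_discr n x \<le> 0 \<longleftrightarrow> x \<le> 2 ^ n + sqrt (2 ^ (2 * n) - 2 ^ n + 2) - 1 / 2"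
proof -
  define t :: real where "t = 2 ^ n"
  define s where "s = sqrt (t\<^sup>2 - t + 2)"
  have radicand: "t\<^sup>2 - t + 2 = (t - 1 / 2)\<^sup>2 + 7 / 4"
    by (simp add: power2_eq_square algebra_simps)
  then have s_sq: "s\<^sup>2 = t\<^sup>2 - t + 2"
    unfolding s_def by (simp add: add_nonneg_pos)
  have "t - 1 / 2 < s"
    unfolding s_def by (rule real_less_rsqrt) (simp add: radicand)
  have "beta2_discr n x = (x - (t + s - 1 / 2)) * (x - (t - 1 / 2 - s))"
    using s_sq by (simp add: beta2_discr_def t_def power2_eq_square algebra_simps)
  moreover have "x - (t - 1 / 2 - s) > 0"
    using \<open>t - 1 / 2 < s\<close> assms by simp
  ultimately have "beta2_discr n x \<le> 0 \<longleftrightarrow> x \<le> t + s - 1 / 2"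
    by (simp add: mult_le_0_iff)
  moreover have "(2::real) ^ (2 * n) = t\<^sup>2"
    unfolding t_def by (simp add: power_mult power2_eq_square flip: power_mult_distrib)
  ultimately show ?thesis unfolding s_def t_def by simp
qed

lemma beta_2_power_plus_const_nonneg:
  assumes "0 < n" "0 < b" "1 \<le> D" and "beta2_discr n (real a / real b) \<le> 0"
  shows "0 \<le> beta 2 D (power_plus_const a b n)"
proof -
  have "0 \<le> real b * ((real_of_int D - real a / real b - 3 / 2)\<^sup>2 - beta2_discr n (real a / real b))"
    using assms(2,4) zero_le_power2[of "real_of_int D - real a / real b - 3 / 2"]
    by (intro mult_nonneg_nonneg) linarith+
  then show ?thesis
    using beta_2_power_plus_const[OF assms(1-3), of a] by linarith
qed

lemma hdepth_power_plus_const_less: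
  assumes "0 < n" "0 < b" "2 \<le> d"
    and beyond_root: "real a / real b + 3 / 2 - sqrt (beta2_discr n (real a / real b)) < real_of_int d"
  shows "hdepth (power_plus_const a b n) < d"
proof (rule hdepth_less)
  fix D assume "d \<le> D"
  show "\<exists>k\<le>D. beta k D (power_plus_const a b n) < 0"
  proof (cases "real_of_int D \<le> real a / real b + 1")
    case True
    with \<open>d \<le> D\<close> assms beta_2_power_plus_const_nonneg_iff[of n b D a] show ?thesis
      by (intro exI[of _ 2]) auto
  next
    case False
    with \<open>d \<le> D\<close> assms beta_1_power_plus_const_nonneg_iff[of n b D a] show ?thesis
      by (intro exI[of _ 1]) auto
  qed
qed (use \<open>0 < n\<close> in \<open>simp_all add: power_plus_const_def\<close>)

theorem lemma3p4:
  fixes a b n :: nat and h :: "int \<Rightarrow> int" and d :: int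
    and \<alpha> \<alpha>\<^sub>1 :: real and g :: "real \<Rightarrow> real"
  assumes "0 < a" "0 < b" "0 < n"
    and h_def: "\<And>j. h j = (if 0 \<le> j then int a * j ^ n + int b else 0)"
    and alpha_def: "\<alpha> = real a / real b"
    and alpha1_def: "\<alpha>\<^sub>1 = 2 ^ n + sqrt (2 ^ (2 * n) - 2 ^ n + 2) - 1 / 2"
    and g_def: "\<And>x. g x = x + 3 / 2 - sqrt (x\<^sup>2 - (2 ^ (n + 1) - 1) * x - 7 / 4)"
    and "2 \<le> d" "d \<le> \<lfloor>\<alpha>\<rfloor> + 1"
  shows "(\<alpha> \<le> \<alpha>\<^sub>1 \<longrightarrow> 0 \<le> beta 2 d h)
       \<and> (\<alpha> > \<alpha>\<^sub>1 \<and> real_of_int d \<le> g \<alpha> \<longrightarrow> 0 \<le> beta 2 d h)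
       \<and> (\<alpha> > \<alpha>\<^sub>1 \<and> real_of_int d > g \<alpha> \<longrightarrow> hdepth h < d)"
proof -
  have h: "h = power_plus_const a b n"
    using h_def by (simp add: power_plus_const_def fun_eq_iff)
  have g: "g \<alpha> = \<alpha> + 3 / 2 - sqrt (beta2_discr n \<alpha>)"
    by (simp add: g_def beta2_discr_def)
  have "real_of_int d \<le> \<alpha> + 1"
    using \<open>d \<le> \<lfloor>\<alpha>\<rfloor> + 1\<close> by linarith
  then have "0 \<le> beta 2 d h \<longleftrightarrow> real_of_int d \<le> g \<alpha>"
    using beta_2_power_plus_const_nonneg_iff[of n b d a, folded alpha_def] assms(2,3,8)
    unfolding h g by simp
  moreover have "0 \<le> beta 2 d h" if "\<alpha> \<le> \<alpha>\<^sub>1"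
    using that beta2_discr_nonpos_iff[of \<alpha> n] beta_2_power_plus_const_nonneg[of n b d a] assms(2,3,8)
    unfolding h alpha_def alpha1_def by simp
  moreover have "hdepth h < d" if "real_of_int d > g \<alpha>"
    using that hdepth_power_plus_const_less[of n b d a, folded alpha_def] assms(2,3,8)
    unfolding h g by simp
  ultimately show ?thesis by blast
qed

end
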